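(* Let $v\in C^\infty(\mathbb T,\mathbb R)$, $j\in\mathbb Z\setminus\{0\}$, and $\widetilde V(t,x):=\cos(jt)v(x)-1$. Then the resonant average of $\widetilde V$ with respect to $K_0=|D|+1$ satisfies $$\langle\widetilde V\rangle=\mathtt v(x)-1+R,\qquad \mathtt v(x):=\mathrm{Re}(v_je^{\mathrm ijx}),$$ where $R\in\mathcal A_{-1}$ is selfadjoint.
   Context: $\mathbb T=\mathbb R/2\pi\mathbb Z$; $v_j$ the $j$-th Fourier coefficient of $v$; $|D|u=\sum|k|u_ke^{\mathrm ikx}$; $K_0:=|D|+1$. Resonant average: $\langle\widetilde V\rangle=\frac1{2\pi}\int_0^{2\pi}e^{\mathrm isK_0}\widetilde V(s)e^{-\mathrm isK_0}ds$. $S^\rho_{\rm per}$: $a\in C^\infty(\mathbb T\times\mathbb R)$ with $|\partial_x^\alpha\partial_\xi^\beta a|\le C_{\alpha\beta}\langle\xi\rangle^{\rho-\beta}$; $\mathrm{Op}(a)u=\sum_ka(x,k)u_ke^{\mathrm ikx}$; $\mathcal A_\rho=\{\mathrm{Op}(a):a\in S^\rho_{\rm per}\}$. *)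

theory Defs
  imports "HOL-Analysis.Analysis"
begin

text \<open>Functions on the torus are 2pi-periodic functions on the reals.
  Operators are represented on Fourier-coefficient sequences (int => complex),
  i.e. via the isometry L2(T) = l2(Z); the identities are required on finitely
  supported sequences (trigonometric polynomials), a dense common domain.\<close>

type_synonym coeffs = "int \<Rightarrow> complex"
type_synonym oper = "coeffs \<Rightarrow> coeffs"

definition periodic2pi :: "(real \<Rightarrow> 'b) \<Rightarrow> bool" where
  "periodic2pi f \<longleftrightarrow> (\<forall>x. f (x + 2 * pi) = f x)"

definition smooth_real :: "(real \<Rightarrow> real) \<Rightarrow> bool" where
  "smooth_real v \<longleftrightarrow> (\<forall>n x. ((deriv ^^ n) v) differentiable (at x))"

definition fcoeff :: "(real \<Rightarrow> complex) \<Rightarrow> int \<Rightarrow> complex" where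
  "fcoeff f k = integral {0..2*pi} (\<lambda>x. f x * exp (- \<i> * of_int k * of_real x)) / of_real (2*pi)"

definition finsupp :: "coeffs \<Rightarrow> bool" where
  "finsupp c \<longleftrightarrow> finite {k. c k \<noteq> 0}"

definition pdx :: "(real \<Rightarrow> real \<Rightarrow> complex) \<Rightarrow> real \<Rightarrow> real \<Rightarrow> complex" where
  "pdx a = (\<lambda>x \<xi>. vector_derivative (\<lambda>y. a y \<xi>) (at x))"

definition pdxi :: "(real \<Rightarrow> real \<Rightarrow> complex) \<Rightarrow> real \<Rightarrow> real \<Rightarrow> complex" where
  "pdxi a = (\<lambda>x \<xi>. vector_derivative (\<lambda>\<eta>. a x \<eta>) (at \<xi>))"

fun pdword :: "bool list \<Rightarrow> (real \<Rightarrow> real \<Rightarrow> complex) \<Rightarrow> real \<Rightarrow> real \<Rightarrow> complex" where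
  "pdword [] a = a"
| "pdword (b # ws) a = (if b then pdx else pdxi) (pdword ws a)"

definition smooth2 :: "(real \<Rightarrow> real \<Rightarrow> complex) \<Rightarrow> bool" where
  "smooth2 a \<longleftrightarrow> (\<forall>ws. continuous_on UNIV (\<lambda>(x, \<xi>). pdword ws a x \<xi>) \<and>
      (\<forall>x \<xi>. (\<lambda>y. pdword ws a y \<xi>) differentiable (at x) \<and>
              (\<lambda>\<eta>. pdword ws a x \<eta>) differentiable (at \<xi>)))"

definition Sper :: "real \<Rightarrow> (real \<Rightarrow> real \<Rightarrow> complex) \<Rightarrow> bool" where
  "Sper \<rho> a \<longleftrightarrow> smooth2 a \<and> (\<forall>x \<xi>. a (x + 2*pi) \<xi> = a x \<xi>) \<and>
     (\<forall>\<alpha> \<beta>::nat. \<exists>C. \<forall>x \<xi>.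
        norm ((pdx ^^ \<alpha>) ((pdxi ^^ \<beta>) a) x \<xi>) \<le> C * (sqrt (1 + \<xi>\<^sup>2)) powr (\<rho> - real \<beta>))"

text \<open>Op(a) u = sum_k a(x,k) u_k e^{ikx}, written on Fourier coefficients:
  (Op(a)u)_m = sum_k (a(.,k))_{m-k} u_k.\<close>
definition Op :: "(real \<Rightarrow> real \<Rightarrow> complex) \<Rightarrow> oper" where
  "Op a c = (\<lambda>m. \<Sum>\<^sub>\<infinity>k. fcoeff (\<lambda>x. a x (of_int k)) (m - k) * c k)"

definition mult_op :: "(real \<Rightarrow> complex) \<Rightarrow> oper" where
  "mult_op f c = (\<lambda>m. \<Sum>\<^sub>\<infinity>k. fcoeff f (m - k) * c k)"

definition expK0 :: "real \<Rightarrow> oper" where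
  "expK0 s c = (\<lambda>k. exp (\<i> * of_real s * of_int (\<bar>k\<bar> + 1)) * c k)"

definition res_avg :: "(real \<Rightarrow> oper) \<Rightarrow> oper" where
  "res_avg V c = (\<lambda>m. integral {0..2*pi} (\<lambda>s. expK0 s (V s (expK0 (- s) c)) m) / of_real (2*pi))"

text \<open>Selfadjointness w.r.t. the (Parseval) L2 inner product, on trigonometric polynomials.\<close>
definition selfadjoint_op :: "oper \<Rightarrow> bool" where
  "selfadjoint_op R \<longleftrightarrow> (\<forall>c d. finsupp c \<longrightarrow> finsupp d \<longrightarrow>
     (\<Sum>\<^sub>\<infinity>m. R c m * cnj (d m)) = (\<Sum>\<^sub>\<infinity>m. c m * cnj (R d m)))"

end

theory Submission
  imports Defs "HOL-Computational_Algebra.Polynomial"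
begin

text \<open>In Fourier coordinates every operator here is a matrix.  Conjugating the multiplication by
  \<open>cos(j s) v(x) - 1\<close> with \<open>exp(i s K\<^sub>0)\<close> and averaging over \<open>s\<close> keeps the entries \<open>(m,k)\<close> with
  \<open>|m| - |k| = \<plusminus>j\<close>, while multiplication by \<open>\<^bold>v - 1\<close> keeps those with \<open>m - k = \<plusminus>j\<close>.  When \<open>m\<close> and \<open>k\<close>
  have the same sign these conditions agree, so the remainder \<open>R\<close> lives where \<open>m k < 0\<close>; there
  \<open>|m - k| = |m| + |k|\<close>, and the rapid decay of \<open>v\<^sub>m\<^sub>-\<^sub>k\<close> becomes decay in \<open>k\<close>.  Each column of \<open>R\<close> has at most
  four entries, so gluing the columns with a bump function in \<open>\<xi>\<close> gives a symbol in \<open>S\<^sup>-\<^sup>1\<close>, and \<open>R\<close> is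
  Hermitian because \<open>v\<close> is real.\<close>

subsection \<open>Smooth real functions and a bump function\<close>

lemma smooth_real_DERIV:
  "smooth_real f \<Longrightarrow> ((deriv^^n) f has_real_derivative (deriv^^Suc n) f x) (at x)"
  unfolding smooth_real_def by (simp add: DERIV_deriv_iff_real_differentiable)

lemma smooth_real_continuous_on: "smooth_real f \<Longrightarrow> continuous_on S ((deriv^^n) f)"
  by (meson DERIV_isCont continuous_at_imp_continuous_on smooth_real_DERIV)

lemma smooth_real_deriv: "smooth_real f \<Longrightarrow> smooth_real (deriv f)"
  unfolding smooth_real_def by (metis funpow_Suc_right o_apply)

definition differentiable_upto :: "nat \<Rightarrow> (real \<Rightarrow> real) \<Rightarrow> bool" where
  "differentiable_upto n f \<longleftrightarrow> (\<forall>m<n. \<forall>x. (deriv^^m) f differentiable (at x))"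

lemma smooth_real_iff_differentiable_upto: "smooth_real f \<longleftrightarrow> (\<forall>n. differentiable_upto n f)"
  unfolding smooth_real_def differentiable_upto_def by (meson lessI)

lemma differentiable_upto_Suc:
  "differentiable_upto (Suc n) f \<longleftrightarrow> (\<forall>x. f differentiable (at x)) \<and> differentiable_upto n (deriv f)"
  unfolding differentiable_upto_def
  by (auto simp: less_Suc_eq_0_disj funpow_Suc_right simp del: funpow.simps)

lemma funpow_deriv_add:
  assumes "differentiable_upto n u" "differentiable_upto n w"
  shows "(deriv^^n) (\<lambda>t. u t + w t) = (\<lambda>t. (deriv^^n) u t + (deriv^^n) w t)"
  using assms
proof (induction n)
  case (Suc n)
  have u: "differentiable_upto n u" and w: "differentiable_upto n w"
    using Suc.prems by (auto simp: differentiable_upto_def)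
  show ?case
  proof
    fix t
    have "((deriv^^n) u has_real_derivative (deriv^^Suc n) u t) (at t)"
         "((deriv^^n) w has_real_derivative (deriv^^Suc n) w t) (at t)"
      using Suc.prems by (simp_all add: differentiable_upto_def DERIV_deriv_iff_real_differentiable)
    then show "(deriv^^Suc n) (\<lambda>t. u t + w t) t = (deriv^^Suc n) u t + (deriv^^Suc n) w t"
      using Suc.IH[OF u w] by (auto intro!: DERIV_imp_deriv DERIV_add)
  qed
qed simp

lemma differentiable_upto_add:
  "differentiable_upto n u \<Longrightarrow> differentiable_upto n w \<Longrightarrow> differentiable_upto n (\<lambda>t. u t + w t)"
proof -
  assume u: "differentiable_upto n u" and w: "differentiable_upto n w"
  have "(deriv^^m) (\<lambda>t. u t + w t) differentiable (at x)" if "m < n" for m x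
  proof -
    have "differentiable_upto m u" "differentiable_upto m w"
      using u w that by (auto simp: differentiable_upto_def)
    then show ?thesis
      using u w that by (auto simp: funpow_deriv_add differentiable_upto_def intro!: differentiable_add)
  qed
  then show ?thesis by (simp add: differentiable_upto_def)
qed

lemma deriv_mult_fun:
  assumes "smooth_real f" "smooth_real g"
  shows "deriv (\<lambda>t. f t * g t) = (\<lambda>t. deriv f t * g t + f t * deriv g t)"
proof
  fix t
  have "(f has_real_derivative deriv f t) (at t)" "(g has_real_derivative deriv g t) (at t)"
    using smooth_real_DERIV[OF assms(1), of 0] smooth_real_DERIV[OF assms(2), of 0] by simp_all
  then show "deriv (\<lambda>t. f t * g t) t = deriv f t * g t + f t * deriv g t"
    by (intro DERIV_imp_deriv) (auto intro!: derivative_eq_intros)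
qed

lemma differentiable_upto_mult:
  "smooth_real f \<Longrightarrow> smooth_real g \<Longrightarrow> differentiable_upto n (\<lambda>t. f t * g t)"
proof (induction n arbitrary: f g)
  case 0
  then show ?case by (simp add: differentiable_upto_def)
next
  case (Suc n)
  have "(\<lambda>t. f t * g t) differentiable (at x)" for x
    using Suc.prems by (intro differentiable_mult) (auto simp: smooth_real_def dest: spec[of _ 0])
  moreover have "differentiable_upto n (\<lambda>t. deriv f t * g t + f t * deriv g t)"
    using Suc by (intro differentiable_upto_add Suc.IH smooth_real_deriv)
  ultimately show ?case
    by (simp add: differentiable_upto_Suc deriv_mult_fun[OF Suc.prems])
qed

lemma smooth_real_mult: "smooth_real f \<Longrightarrow> smooth_real g \<Longrightarrow> smooth_real (\<lambda>t. f t * g t)"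
  by (simp add: smooth_real_iff_differentiable_upto differentiable_upto_mult)

lemma smooth_real_const: "smooth_real (\<lambda>t. c)"
proof -
  have "(deriv^^n) (\<lambda>t. c) = (\<lambda>t. if n = 0 then c else 0)" for n
    by (induction n) auto
  then show ?thesis unfolding smooth_real_def by simp
qed

lemma funpow_deriv_affine:
  assumes "smooth_real f"
  shows "(deriv^^n) (\<lambda>t. f (a*t+c)) = (\<lambda>t. a^n * (deriv^^n) f (a*t+c))"
proof (induction n)
  case (Suc n)
  have "((\<lambda>t. a^n * (deriv^^n) f (a*t+c)) has_real_derivative a^n * ((deriv^^Suc n) f (a*t+c) * a))
      (at t)" for t
    by (intro DERIV_cmult DERIV_chain2[OF smooth_real_DERIV[OF assms]]) (auto intro!: derivative_eq_intros)
  then show ?case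
    using Suc by (auto intro!: DERIV_imp_deriv simp: algebra_simps)
qed simp

lemma smooth_real_affine: "smooth_real f \<Longrightarrow> smooth_real (\<lambda>t. f (a*t+c))"
  unfolding smooth_real_def[of "\<lambda>t. f (a*t+c)"] funpow_deriv_affine
proof (intro allI)
  fix n x assume f: "smooth_real f"
  have "((\<lambda>t. a^n * (deriv^^n) f (a*t+c)) has_real_derivative a^n * ((deriv^^Suc n) f (a*x+c) * a)) (at x)"
    by (intro DERIV_cmult DERIV_chain2[OF smooth_real_DERIV[OF f]]) (auto intro!: derivative_eq_intros)
  then show "(\<lambda>t. a^n * (deriv^^n) f (a*t+c)) differentiable (at x)"
    using real_differentiable_def by blast
qed

text \<open>Differentiating \<open>p(1/s) exp(-1/s)\<close> gives \<open>q(1/s) exp(-1/s)\<close> with \<open>q(u) = u\<^sup>2 (p(u) - p'(u))\<close>, so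
  all derivatives of \<open>flat_exp p\<close> at \<open>0\<close> reduce to the limit \<open>p(u) exp(-u) \<rightarrow> 0\<close>.\<close>

definition flat_exp :: "real poly \<Rightarrow> real \<Rightarrow> real" where
  "flat_exp p s = (if s > 0 then poly p (1/s) * exp (- 1 / s) else 0)"

definition flat_exp_deriv_poly :: "real poly \<Rightarrow> real poly" where
  "flat_exp_deriv_poly p = [:0,0,1:] * (p - pderiv p)"

lemma poly_times_exp_neg_tendsto_0: "((\<lambda>u. poly p u * exp (-u)) \<longlongrightarrow> (0::real)) at_top"
proof -
  have "((\<lambda>u. \<Sum>i\<le>degree p. coeff p i * (u ^ i / exp u)) \<longlongrightarrow> (\<Sum>i\<le>degree p. coeff p i * 0)) at_top"
    by (intro tendsto_sum tendsto_mult tendsto_const tendsto_power_div_exp_0)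
  then show ?thesis
    by (simp add: poly_altdef sum_divide_distrib exp_minus field_simps)
qed

lemma flat_exp_has_derivative_at_0: "(flat_exp p has_real_derivative 0) (at 0)"
proof -
  have left: "((\<lambda>h. (flat_exp p h - flat_exp p 0) / h) \<longlongrightarrow> 0) (at_left 0)"
  proof (rule Lim_transform_eventually[OF tendsto_const])
    have "eventually (\<lambda>h. h \<in> {-1<..<0}) (at_left (0::real))"
      by (rule eventually_at_left_real) simp
    then show "eventually (\<lambda>h. 0 = (flat_exp p h - flat_exp p 0) / h) (at_left (0::real))"
      by (rule eventually_mono) (auto simp: flat_exp_def)
  qed
  have "((\<lambda>h. poly (pCons 0 p) (inverse h) * exp (- inverse h)) \<longlongrightarrow> (0::real)) (at_right 0)"
    by (rule filterlim_compose[OF poly_times_exp_neg_tendsto_0 filterlim_inverse_at_top_right])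
  then have right: "((\<lambda>h. (flat_exp p h - flat_exp p 0) / h) \<longlongrightarrow> 0) (at_right 0)"
  proof (rule Lim_transform_eventually)
    have "eventually (\<lambda>h. h \<in> {0<..<1}) (at_right (0::real))"
      by (rule eventually_at_right_real) simp
    then show "eventually (\<lambda>h. poly (pCons 0 p) (inverse h) * exp (- inverse h)
        = (flat_exp p h - flat_exp p 0) / h) (at_right (0::real))"
      by (rule eventually_mono) (auto simp: flat_exp_def field_simps)
  qed
  have "((\<lambda>h. (flat_exp p h - flat_exp p 0) / (h - 0)) \<longlongrightarrow> 0) (at 0)"
    using left right by (simp add: filterlim_split_at_real)
  then show ?thesis
    by (simp add: has_field_derivative_iff)
qed

lemma flat_exp_has_derivative:
  "(flat_exp p has_real_derivative flat_exp (flat_exp_deriv_poly p) s) (at s)"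
proof -
  consider "s > 0" | "s < 0" | "s = 0" by linarith
  then show ?thesis
  proof cases
    case 1
    have d: "((\<lambda>s. poly p (1/s) * exp (- 1 / s)) has_real_derivative
         poly (pderiv p) (1/s) * (- 1 / s^2) * exp (-1/s) + poly p (1/s) * (exp (-1/s) * (1/s^2))) (at s)"
      using 1 by (auto intro!: derivative_eq_intros DERIV_chain2[OF poly_DERIV]
          simp: power2_eq_square field_simps)
    have e: "poly (pderiv p) (1/s) * (- 1 / s^2) * exp (-1/s) + poly p (1/s) * (exp (-1/s) * (1/s^2))
        = flat_exp (flat_exp_deriv_poly p) s"
      using 1 by (simp add: flat_exp_def flat_exp_deriv_poly_def power2_eq_square field_simps)
    show ?thesis
      by (rule has_field_derivative_transform_within_open[where S="{0<..}"]) (use d e 1 in \<open>auto simp: flat_exp_def\<close>)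
  next
    case 2
    have "(flat_exp p has_real_derivative 0) (at s)"
      by (rule has_field_derivative_transform_within_open[where S="{..<0}", OF DERIV_const])
        (use 2 in \<open>auto simp: flat_exp_def\<close>)
    then show ?thesis using 2 by (simp add: flat_exp_def)
  next
    case 3
    then show ?thesis using flat_exp_has_derivative_at_0 by (simp add: flat_exp_def)
  qed
qed

lemma smooth_real_flat_exp: "smooth_real (flat_exp p)"
proof -
  have "(deriv^^n) (flat_exp p) = flat_exp ((flat_exp_deriv_poly^^n) p)" for n
  proof (induction n arbitrary: p)
    case (Suc n)
    have "deriv (flat_exp p) = flat_exp (flat_exp_deriv_poly p)"
      by (rule ext, rule DERIV_imp_deriv, rule flat_exp_has_derivative)
    then show ?case
      using Suc.IH by (simp only: funpow_Suc_right o_apply)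
  qed simp
  then show ?thesis
    unfolding smooth_real_def using flat_exp_has_derivative real_differentiable_def by metis
qed

definition bump :: "real \<Rightarrow> real" where
  "bump t = flat_exp 1 (1/4 + t) * flat_exp 1 (1/4 - t) / (flat_exp 1 (1/4))^2"

lemma smooth_real_bump: "smooth_real bump"
proof -
  have "smooth_real (\<lambda>t. flat_exp 1 (1 * t + 1/4))" "smooth_real (\<lambda>t. flat_exp 1 ((-1) * t + 1/4))"
    by (intro smooth_real_affine smooth_real_flat_exp)+
  then have "smooth_real (\<lambda>t. flat_exp 1 (1/4 + t) * flat_exp 1 (1/4 - t) * (1 / (flat_exp 1 (1/4))^2))"
    by (intro smooth_real_mult smooth_real_const) (simp_all add: add.commute)
  then show ?thesis
    unfolding bump_def by simp
qed

lemma bump_0: "bump 0 = 1"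
  by (simp add: bump_def flat_exp_def power2_eq_square)

lemma bump_eq_0: "\<bar>t\<bar> \<ge> 1/4 \<Longrightarrow> bump t = 0"
  by (auto simp: bump_def flat_exp_def)

subsection \<open>Fourier coefficients\<close>

abbreviation expi :: "int \<Rightarrow> real \<Rightarrow> complex" where
  "expi q s \<equiv> exp (\<i> * of_int q * of_real s)"

lemma expi_mult: "expi a s * expi b s = expi (a + b) s"
  by (simp add: exp_add[symmetric] algebra_simps)

lemma norm_expi: "norm (expi q x) = 1"
proof -
  have "\<i> * of_int q * of_real x = \<i> * complex_of_real (of_int q * x)" by simp
  then show ?thesis by (simp only: norm_exp_i_times)
qed

lemma expi_2pi: "expi q (2*pi) = 1"
proof -
  have "expi q (2*pi) = exp ((2 * of_int q * pi) * \<i>)" by (simp add: algebra_simps)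
  also have "\<dots> = 1" by (rule exp_integer_2pi) simp
  finally show ?thesis .
qed

lemma expi_periodic: "expi q (x + 2*pi) = expi q x"
  using expi_2pi[of q] by (simp add: distrib_left exp_add)

lemma has_vector_derivative_expi: "(expi q has_vector_derivative (\<i> * of_int q * expi q x)) (at x)"
proof -
  have "((\<lambda>z. exp (\<i> * of_int q * z)) has_field_derivative exp (\<i> * of_int q * of_real x) * (\<i> * of_int q))
      (at (of_real x :: complex))"
    by (auto intro!: derivative_eq_intros)
  from has_vector_derivative_real_field[OF this] show ?thesis by (simp add: mult.commute)
qed

lemma has_integral_expi: "(expi q has_integral (if q = 0 then of_real (2*pi) else 0)) {0..2*pi}"
proof (cases "q = 0")
  case True
  then show ?thesis using has_integral_const_real[of "1::complex" 0 "2*pi"] by (simp add: scaleR_conv_of_real)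
next
  case False
  have "((\<lambda>x. expi q x / (\<i> * of_int q)) has_vector_derivative expi q x) (at x within {0..2*pi})" for x
  proof -
    have "((\<lambda>z. exp (\<i> * of_int q * z) / (\<i> * of_int q)) has_field_derivative expi q x)
        (at (of_real x :: complex))"
      using False by (auto intro!: derivative_eq_intros)
    from has_vector_derivative_real_field[OF this] show ?thesis
      by (rule has_vector_derivative_at_within)
  qed
  then have "(expi q has_integral (expi q (2*pi) / (\<i> * of_int q) - expi q 0 / (\<i> * of_int q))) {0..2*pi}"
    by (intro fundamental_theorem_of_calculus) simp_all
  then show ?thesis unfolding expi_2pi using False by simp
qed

lemma fcoeff_expi: "fcoeff (expi p) n = (if p = n then 1 else 0)"
proof -
  have "(\<lambda>x. expi p x * exp (- \<i> * of_int n * of_real x)) = expi (p - n)"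
    by (rule ext, subst exp_add[symmetric]) (simp add: algebra_simps)
  then show ?thesis
    unfolding fcoeff_def using integral_unique[OF has_integral_expi[of "p - n"]] by simp
qed

lemma integrable_fcoeff_integrand:
  "continuous_on {0..2*pi} f \<Longrightarrow> (\<lambda>x. f x * exp (- \<i> * of_int k * of_real x)) integrable_on {0..2*pi}"
  by (intro integrable_continuous_interval continuous_intros) auto

lemma fcoeff_add:
  assumes "continuous_on {0..2*pi} f" "continuous_on {0..2*pi} g"
  shows "fcoeff (\<lambda>x. f x + g x) n = fcoeff f n + fcoeff g n"
  unfolding fcoeff_def distrib_right
  by (subst integral_add[OF assms[THEN integrable_fcoeff_integrand]]) (simp add: add_divide_distrib)

lemma fcoeff_diff:
  assumes "continuous_on {0..2*pi} f" "continuous_on {0..2*pi} g"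
  shows "fcoeff (\<lambda>x. f x - g x) n = fcoeff f n - fcoeff g n"
  unfolding fcoeff_def left_diff_distrib
  by (subst integral_diff[OF assms[THEN integrable_fcoeff_integrand]]) (simp add: diff_divide_distrib)

lemma fcoeff_cmult: "fcoeff (\<lambda>x. c * f x) n = c * fcoeff f n"
  unfolding fcoeff_def mult.assoc by simp

lemma fcoeff_sum:
  assumes "finite S" "\<And>i. i \<in> S \<Longrightarrow> continuous_on {0..2*pi} (f i)"
  shows "fcoeff (\<lambda>x. \<Sum>i\<in>S. f i x) n = (\<Sum>i\<in>S. fcoeff (f i) n)"
  unfolding fcoeff_def sum_distrib_right
  using assms
  by (subst integral_sum) (simp_all add: integrable_fcoeff_integrand[simplified] sum_divide_distrib)

lemma fcoeff_const: "fcoeff (\<lambda>x. c) n = (if n = 0 then c else 0)"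
  using fcoeff_cmult[of c "expi 0" n] fcoeff_expi[of 0 n] by auto

lemma fcoeff_of_real_uminus:
  "fcoeff (\<lambda>x. complex_of_real (f x)) (- n) = cnj (fcoeff (\<lambda>x. complex_of_real (f x)) n)"
  unfolding fcoeff_def by (simp add: integral_cnj exp_cnj)

lemma norm_fcoeff_le:
  assumes "continuous_on {0..2*pi} f" "\<And>x. x \<in> {0..2*pi} \<Longrightarrow> norm (f x) \<le> M"
  shows "norm (fcoeff f n) \<le> M"
proof -
  have M: "0 \<le> M" using assms(2)[of 0] by (auto intro: order_trans[OF norm_ge_zero])
  have "norm (integral {0..2*pi} (\<lambda>x. f x * exp (- \<i> * of_int n * of_real x)))
      \<le> M * measure lborel (cbox 0 (2*pi))"
    apply (rule has_integral_bound[OF M])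
    unfolding box_real(2) apply (rule integrable_integral[OF integrable_fcoeff_integrand[OF assms(1)]])
    using assms(2) norm_expi[of "-n"] by (simp add: norm_mult)
  then show ?thesis unfolding fcoeff_def by (simp add: norm_divide field_simps)
qed

lemma fcoeff_deriv:
  assumes f': "\<And>x. (f has_vector_derivative f' x) (at x)" and c: "continuous_on UNIV f'"
    and "f (2*pi) = f 0"
  shows "fcoeff f' n = \<i> * of_int n * fcoeff f n"
proof -
  let ?e = "\<lambda>x. exp (- \<i> * of_int n * of_real x)"
  let ?g = "\<lambda>x. f' x * ?e x - \<i> * of_int n * (f x * ?e x)"
  have cf: "continuous_on {0..2*pi} f"
    using f' by (meson continuous_at_imp_continuous_on has_vector_derivative_continuous)
  have "((\<lambda>x. f x * ?e x) has_vector_derivative ?g x) (at x within {0..2*pi})" for x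
  proof -
    have d: "((\<lambda>x. f x * ?e x) has_vector_derivative f x * (- \<i> * of_int n * ?e x) + f' x * ?e x) (at x)"
      using has_vector_derivative_mult[OF f' has_vector_derivative_expi[of "-n" x]] by simp
    have eq: "f x * (- \<i> * of_int n * ?e x) + f' x * ?e x = ?g x"
      by (simp add: algebra_simps)
    show ?thesis using d unfolding eq by (rule has_vector_derivative_at_within)
  qed
  then have "(?g has_integral f (2*pi) * ?e (2*pi) - f 0 * ?e 0) {0..2*pi}"
    by (intro fundamental_theorem_of_calculus) simp_all
  moreover have "?e (2*pi) = 1"
    using expi_2pi[of "-n"] by simp
  ultimately have "integral {0..2*pi} ?g = 0"
    using assms(3) by (simp add: integral_unique)
  moreover have "integral {0..2*pi} ?g
      = integral {0..2*pi} (\<lambda>x. f' x * ?e x) - \<i> * of_int n * integral {0..2*pi} (\<lambda>x. f x * ?e x)"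
  proof -
    have "(\<lambda>x. f' x * ?e x) integrable_on {0..2*pi}"
      by (rule integrable_fcoeff_integrand[OF continuous_on_subset[OF c subset_UNIV]])
    moreover have "(\<lambda>x. \<i> * of_int n * (f x * ?e x)) integrable_on {0..2*pi}"
      by (rule integrable_on_mult_right[OF integrable_fcoeff_integrand[OF cf]])
    ultimately show ?thesis by (subst integral_diff) simp_all
  qed
  ultimately show ?thesis
    unfolding fcoeff_def by (simp add: field_simps)
qed

definition rapid_decay :: "(int \<Rightarrow> complex) \<Rightarrow> bool" where
  "rapid_decay V \<longleftrightarrow> (\<forall>N. \<exists>D. \<forall>n. (1 + real_of_int \<bar>n\<bar>)^N * norm (V n) \<le> D)"

definition conj_symmetric :: "(int \<Rightarrow> complex) \<Rightarrow> bool" where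
  "conj_symmetric V \<longleftrightarrow> (\<forall>n. V (-n) = cnj (V n))"

lemma conj_symmetric_fcoeff_of_real: "conj_symmetric (fcoeff (\<lambda>x. complex_of_real (f x)))"
  unfolding conj_symmetric_def using fcoeff_of_real_uminus[of f] by simp

lemma funpow_deriv_periodic:
  assumes "smooth_real f" "\<And>x. f (x + 2*pi) = f x"
  shows "(deriv^^p) f (x + 2*pi) = (deriv^^p) f x"
proof (induction p arbitrary: x)
  case (Suc p)
  have "((\<lambda>y. (deriv^^p) f (y + 2*pi)) has_real_derivative (deriv^^Suc p) f (x + 2*pi) * 1) (at x)"
    by (intro DERIV_chain2[OF smooth_real_DERIV[OF assms(1)]]) (auto intro!: derivative_eq_intros)
  then have "((deriv^^p) f has_real_derivative (deriv^^Suc p) f (x + 2*pi)) (at x)"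
    using Suc by simp
  then show ?case
    using smooth_real_DERIV[OF assms(1)] by (rule DERIV_unique)
qed (use assms in simp)

lemma fcoeff_funpow_deriv:
  assumes "smooth_real f" "\<And>x. f (x + 2*pi) = f x"
  shows "fcoeff (\<lambda>x. complex_of_real ((deriv^^p) f x)) n
    = (\<i> * of_int n)^p * fcoeff (\<lambda>x. complex_of_real (f x)) n"
proof (induction p)
  case (Suc p)
  have "fcoeff (\<lambda>x. complex_of_real ((deriv^^Suc p) f x)) n
      = \<i> * of_int n * fcoeff (\<lambda>x. complex_of_real ((deriv^^p) f x)) n"
  proof (rule fcoeff_deriv)
    show "((\<lambda>x. complex_of_real ((deriv^^p) f x)) has_vector_derivative
        complex_of_real ((deriv^^Suc p) f x)) (at x)" for x
      by (rule has_vector_derivative_of_real[OF smooth_real_DERIV[OF assms(1)]])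
    show "continuous_on UNIV (\<lambda>x. complex_of_real ((deriv^^Suc p) f x))"
      by (intro continuous_intros smooth_real_continuous_on[OF assms(1)])
    show "complex_of_real ((deriv^^p) f (2*pi)) = complex_of_real ((deriv^^p) f 0)"
      using funpow_deriv_periodic[of f, OF assms, of p 0] by simp
  qed
  then show ?case using Suc by simp
qed simp

lemma one_plus_power_le: "(0::real) \<le> t \<Longrightarrow> (1 + t)^N \<le> 2^N * (1 + t^N)"
proof (cases "t \<le> 1")
  case True
  assume "0 \<le> t"
  have "(1 + t)^N \<le> 2^N" using True \<open>0 \<le> t\<close> by (intro power_mono) auto
  then show ?thesis using \<open>0 \<le> t\<close> by (simp add: order_trans)
next
  case False
  have "(1 + t)^N \<le> (2*t)^N" using False by (intro power_mono) auto
  also have "\<dots> \<le> 2^N * (1 + t^N)" using False by (simp add: power_mult_distrib)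
  finally show ?thesis .
qed

text \<open>Integrating by parts \<open>p\<close> times bounds \<open>\<bar>n\<bar>\<^sup>p \<bar>v\<^sub>n\<bar>\<close> by the supremum of \<open>\<bar>v\<^sup>(\<^sup>p\<^sup>)\<bar>\<close>.\<close>

lemma rapid_decay_fcoeff:
  assumes "smooth_real f" "\<And>x. f (x + 2*pi) = f x"
  shows "rapid_decay (fcoeff (\<lambda>x. complex_of_real (f x)))"
proof -
  let ?V = "fcoeff (\<lambda>x. complex_of_real (f x))"
  have bound: "\<exists>M. \<forall>n. real_of_int \<bar>n\<bar>^p * norm (?V n) \<le> M" for p
  proof -
    have cont: "continuous_on {0..2*pi} (\<lambda>x. complex_of_real ((deriv^^p) f x))"
      by (intro continuous_intros smooth_real_continuous_on[OF assms(1)])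
    obtain M where M: "\<And>x. x \<in> {0..2*pi} \<Longrightarrow> norm (complex_of_real ((deriv^^p) f x)) \<le> M"
      using continuous_on_compact_bound[OF compact_Icc cont] by blast
    have "real_of_int \<bar>n\<bar>^p * norm (?V n) \<le> M" for n
      using norm_fcoeff_le[OF cont M, of n] by (simp add: fcoeff_funpow_deriv[of f, OF assms] norm_mult norm_power)
    then show ?thesis by blast
  qed
  show ?thesis
    unfolding rapid_decay_def
  proof
    fix N
    obtain M0 MN where M0: "\<And>n. real_of_int \<bar>n\<bar>^0 * norm (?V n) \<le> M0"
      and MN: "\<And>n. real_of_int \<bar>n\<bar>^N * norm (?V n) \<le> MN"
      using bound by metis
    have "(1 + real_of_int \<bar>n\<bar>)^N * norm (?V n) \<le> 2^N * (M0 + MN)" for n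
    proof -
      have "(1 + real_of_int \<bar>n\<bar>)^N * norm (?V n) \<le> 2^N * (1 + real_of_int \<bar>n\<bar>^N) * norm (?V n)"
        by (intro mult_right_mono one_plus_power_le) auto
      also have "\<dots> = 2^N * (real_of_int \<bar>n\<bar>^0 * norm (?V n) + real_of_int \<bar>n\<bar>^N * norm (?V n))"
        by (simp add: algebra_simps)
      also have "\<dots> \<le> 2^N * (M0 + MN)"
        using M0[of n] MN[of n] by (intro mult_left_mono) auto
      finally show ?thesis .
    qed
    then show "\<exists>D. \<forall>n. (1 + real_of_int \<bar>n\<bar>)^N * norm (?V n) \<le> D" by blast
  qed
qed

subsection \<open>Operators given by matrices\<close>

definition matrix_op :: "(int \<Rightarrow> int \<Rightarrow> complex) \<Rightarrow> oper" where
  "matrix_op A c = (\<lambda>m. \<Sum>\<^sub>\<infinity>k. A m k * c k)"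

lemma Op_eq_matrix_op: "Op a = matrix_op (\<lambda>m k. fcoeff (\<lambda>x. a x (of_int k)) (m - k))"
  by (simp add: fun_eq_iff Op_def matrix_op_def)

lemma mult_op_eq_matrix_op: "mult_op f = matrix_op (\<lambda>m k. fcoeff f (m - k))"
  by (simp add: fun_eq_iff mult_op_def matrix_op_def)

lemma infsum_UNIV_eq_sum:
  assumes "finite F" "\<And>k. k \<notin> F \<Longrightarrow> g k = 0"
  shows "infsum g UNIV = sum g F"
proof -
  have "infsum g UNIV = infsum g F"
    by (rule infsum_cong_neutral) (use assms in auto)
  then show ?thesis using assms by simp
qed

lemma matrix_op_finsupp:
  "finsupp c \<Longrightarrow> matrix_op A c m = (\<Sum>k\<in>{k. c k \<noteq> 0}. A m k * c k)"
  unfolding matrix_op_def by (rule infsum_UNIV_eq_sum) (auto simp: finsupp_def)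

lemma matrix_op_add:
  "finsupp c \<Longrightarrow> matrix_op (\<lambda>m k. A m k + B m k) c m = matrix_op A c m + matrix_op B c m"
  by (simp add: matrix_op_finsupp distrib_right sum.distrib)

lemma selfadjoint_matrix_op:
  assumes "\<And>m k. A k m = cnj (A m k)"
  shows "selfadjoint_op (matrix_op A)"
  unfolding selfadjoint_op_def
proof (intro allI impI)
  fix c d :: coeffs assume c: "finsupp c" and d: "finsupp d"
  define Fc where "Fc = {k. c k \<noteq> 0}"
  define Fd where "Fd = {k. d k \<noteq> 0}"
  have "finite Fc" "finite Fd" using c d by (simp_all add: Fc_def Fd_def finsupp_def)
  have "(\<Sum>\<^sub>\<infinity>m. matrix_op A c m * cnj (d m)) = (\<Sum>m\<in>Fd. matrix_op A c m * cnj (d m))"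
    by (rule infsum_UNIV_eq_sum) (use \<open>finite Fd\<close> in \<open>simp_all add: Fd_def\<close>)
  also have "\<dots> = (\<Sum>m\<in>Fd. \<Sum>k\<in>Fc. A m k * c k * cnj (d m))"
    unfolding matrix_op_finsupp[OF c] Fc_def[symmetric] by (simp add: sum_distrib_right)
  also have "\<dots> = (\<Sum>k\<in>Fc. \<Sum>m\<in>Fd. A m k * c k * cnj (d m))"
    by (rule sum.swap)
  also have "\<dots> = (\<Sum>k\<in>Fc. c k * cnj (\<Sum>m\<in>Fd. A k m * d m))"
    by (simp add: sum_distrib_left assms[symmetric] mult_ac)
  also have "\<dots> = (\<Sum>k\<in>Fc. c k * cnj (matrix_op A d k))"
    unfolding matrix_op_finsupp[OF d] Fd_def ..
  also have "\<dots> = (\<Sum>\<^sub>\<infinity>k. c k * cnj (matrix_op A d k))"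
    by (rule infsum_UNIV_eq_sum[symmetric]) (use \<open>finite Fc\<close> in \<open>simp_all add: Fc_def\<close>)
  finally show "(\<Sum>\<^sub>\<infinity>m. matrix_op A c m * cnj (d m)) = (\<Sum>\<^sub>\<infinity>m. c m * cnj (matrix_op A d m))" .
qed

subsection \<open>The matrices of the resonant average and of its remainder\<close>

definition pm_ind :: "int \<Rightarrow> int \<Rightarrow> complex" where
  "pm_ind j d = of_bool (d = j) + of_bool (d = -j)"

lemma pm_ind_uminus [simp]: "pm_ind j (- d) = pm_ind j d"
  by (auto simp: pm_ind_def)

lemma cnj_pm_ind [simp]: "cnj (pm_ind j d) = pm_ind j d"
  by (simp add: pm_ind_def)

lemma norm_pm_ind_diff_le: "norm (pm_ind j a - pm_ind j b) \<le> 2"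
  by (auto simp: pm_ind_def)

definition avg_coeff :: "(int \<Rightarrow> complex) \<Rightarrow> int \<Rightarrow> int \<Rightarrow> int \<Rightarrow> complex" where
  "avg_coeff V j m k = V (m - k) * pm_ind j (\<bar>m\<bar> - \<bar>k\<bar>) / 2 - of_bool (m = k)"

definition mult_coeff :: "(int \<Rightarrow> complex) \<Rightarrow> int \<Rightarrow> int \<Rightarrow> complex" where
  "mult_coeff V j d = of_bool (d = j) * V j / 2 + of_bool (d = -j) * cnj (V j) / 2 - of_bool (d = 0)"

definition rem_coeff :: "(int \<Rightarrow> complex) \<Rightarrow> int \<Rightarrow> int \<Rightarrow> int \<Rightarrow> complex" where
  "rem_coeff V j m k = avg_coeff V j m k - mult_coeff V j (m - k)"

lemma mult_coeff_conj_symmetric: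
  assumes "conj_symmetric V"
  shows "mult_coeff V j d = V d * pm_ind j d / 2 - of_bool (d = 0)"
proof -
  have "cnj (V j) = V (- j)"
    using assms by (simp add: conj_symmetric_def)
  then show ?thesis
    unfolding mult_coeff_def pm_ind_def by (cases "d = j"; cases "d = -j") (auto simp: field_simps)
qed

lemma rem_coeff_conj_symmetric:
  "conj_symmetric V \<Longrightarrow> rem_coeff V j m k = V (m - k) * (pm_ind j (\<bar>m\<bar> - \<bar>k\<bar>) - pm_ind j (m - k)) / 2"
  unfolding rem_coeff_def avg_coeff_def by (simp add: mult_coeff_conj_symmetric field_simps)

lemma rem_coeff_swap:
  assumes "conj_symmetric V"
  shows "rem_coeff V j k m = cnj (rem_coeff V j m k)"
proof -
  have "V (k - m) = cnj (V (m - k))"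
    using assms[unfolded conj_symmetric_def, rule_format, of "m - k"] by simp
  moreover have "pm_ind j (\<bar>k\<bar> - \<bar>m\<bar>) = pm_ind j (\<bar>m\<bar> - \<bar>k\<bar>)" "pm_ind j (k - m) = pm_ind j (m - k)"
    using pm_ind_uminus[of j "\<bar>m\<bar> - \<bar>k\<bar>"] pm_ind_uminus[of j "m - k"] by simp_all
  ultimately show ?thesis
    by (simp add: rem_coeff_conj_symmetric[OF assms])
qed

lemma norm_rem_coeff_le: "conj_symmetric V \<Longrightarrow> norm (rem_coeff V j m k) \<le> norm (V (m - k))"
  using mult_left_mono[OF norm_pm_ind_diff_le[of j "\<bar>m\<bar> - \<bar>k\<bar>" "m - k"], of "norm (V (m - k))"]
  by (simp add: rem_coeff_conj_symmetric norm_mult norm_divide)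

lemma rem_coeff_nonzero_imp:
  assumes "conj_symmetric V" "rem_coeff V j m k \<noteq> 0"
  shows "2 * \<bar>k\<bar> \<le> \<bar>j\<bar> + \<bar>m - k\<bar>"
proof -
  have ind: "pm_ind j (\<bar>m\<bar> - \<bar>k\<bar>) \<noteq> pm_ind j (m - k)"
    using assms by (auto simp: rem_coeff_conj_symmetric)
  have "m * k < 0"
  proof (rule ccontr)
    assume "\<not> m * k < 0"
    then have "\<bar>m\<bar> - \<bar>k\<bar> = m - k \<or> \<bar>m\<bar> - \<bar>k\<bar> = - (m - k)"
      by (cases "0 \<le> k"; cases "0 \<le> m") (auto simp: mult_less_0_iff)
    then show False
      using ind pm_ind_uminus[of j "m - k"] by auto
  qed
  then have mk: "\<bar>m - k\<bar> = \<bar>m\<bar> + \<bar>k\<bar>"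
    by (auto simp: mult_less_0_iff)
  from ind have "\<bar>m\<bar> - \<bar>k\<bar> = j \<or> \<bar>m\<bar> - \<bar>k\<bar> = -j \<or> m - k = j \<or> m - k = -j"
    by (auto simp: pm_ind_def)
  then show ?thesis
    using mk by arith
qed

definition rem_support :: "int \<Rightarrow> int \<Rightarrow> int set" where
  "rem_support j k = {k + j, k - j, - k + j, - k - j}"

lemma finite_rem_support: "finite (rem_support j k)"
  by (simp add: rem_support_def)

lemma card_rem_support_le: "card (rem_support j k) \<le> 4"
  unfolding rem_support_def using card_length[of "[k + j, k - j, - k + j, - k - j]"] by simp

lemma rem_coeff_eq_0: "m \<notin> rem_support j k \<Longrightarrow> rem_coeff V j m k = 0"
  unfolding rem_support_def rem_coeff_def avg_coeff_def mult_coeff_def pm_ind_def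
  by (auto simp: abs_if split: if_splits)

lemma rem_coeff_decay:
  assumes "rapid_decay V" "conj_symmetric V"
  shows "\<exists>C. \<forall>m k. (2 + real_of_int \<bar>k\<bar>)^N * real_of_int \<bar>m - k\<bar>^\<alpha> * norm (rem_coeff V j m k) \<le> C"
proof -
  obtain D where D: "\<And>n. (1 + real_of_int \<bar>n\<bar>)^(N + \<alpha>) * norm (V n) \<le> D"
    using assms(1) unfolding rapid_decay_def by blast
  have "(2 + real_of_int \<bar>k\<bar>)^N * real_of_int \<bar>m - k\<bar>^\<alpha> * norm (rem_coeff V j m k)
      \<le> (2 + real_of_int \<bar>j\<bar>)^N * D" for m k
  proof (cases "rem_coeff V j m k = 0")
    case True
    have "0 \<le> D" using D[of 0] by (auto intro: order_trans[rotated])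
    then show ?thesis using True by simp
  next
    case False
    then have "2 * \<bar>k\<bar> \<le> \<bar>j\<bar> + \<bar>m - k\<bar>"
      using rem_coeff_nonzero_imp[OF assms(2)] by blast
    then have "2 + real_of_int \<bar>k\<bar> \<le> (2 + real_of_int \<bar>j\<bar>) * (1 + real_of_int \<bar>m - k\<bar>)"
      by (simp add: algebra_simps) (smt (verit) mult_nonneg_nonneg of_int_abs of_int_add of_int_le_iff
          of_int_mult abs_ge_zero)
    then have "(2 + real_of_int \<bar>k\<bar>)^N * real_of_int \<bar>m - k\<bar>^\<alpha> * norm (rem_coeff V j m k)
        \<le> ((2 + real_of_int \<bar>j\<bar>) * (1 + real_of_int \<bar>m - k\<bar>))^N * (1 + real_of_int \<bar>m - k\<bar>)^\<alpha>
           * norm (V (m - k))"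
      using norm_rem_coeff_le[OF assms(2)] by (intro mult_mono power_mono) auto
    also have "\<dots> = (2 + real_of_int \<bar>j\<bar>)^N * ((1 + real_of_int \<bar>m - k\<bar>)^(N + \<alpha>) * norm (V (m - k)))"
      by (simp only: power_mult_distrib power_add mult_ac)
    also have "\<dots> \<le> (2 + real_of_int \<bar>j\<bar>)^N * D"
      using D[of "m - k"] by (intro mult_left_mono) auto
    finally show ?thesis .
  qed
  then show ?thesis by blast
qed

subsection \<open>Computing the resonant average\<close>

lemma expK0_mult_op_expK0:
  assumes "finsupp c"
  shows "expK0 s (mult_op f (expK0 (-s) c)) m
    = (\<Sum>k\<in>{k. c k \<noteq> 0}. expi (\<bar>m\<bar> - \<bar>k\<bar>) s * fcoeff f (m - k) * c k)"
proof -
  have supp: "{k. expK0 (-s) c k \<noteq> 0} = {k. c k \<noteq> 0}"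
    by (simp add: expK0_def)
  then have "finsupp (expK0 (-s) c)"
    using assms by (simp add: finsupp_def)
  moreover have "exp (\<i> * of_real s * of_int (\<bar>m\<bar> + 1)) * exp (\<i> * of_real (-s) * of_int (\<bar>k\<bar> + 1))
      = expi (\<bar>m\<bar> - \<bar>k\<bar>) s" for k
    by (simp add: exp_add[symmetric] algebra_simps)
  ultimately show ?thesis
    unfolding mult_op_eq_matrix_op
    by (subst (2) expK0_def, simp add: matrix_op_finsupp supp sum_distrib_left expK0_def mult_ac)
qed

lemma cos_expi: "complex_of_real (cos (of_int j * s)) = (expi j s + expi (-j) s) / 2"
proof -
  have "complex_of_real (cos (of_int j * s)) = cos (of_real (of_int j * s))"
    by (rule cos_of_real[symmetric])
  also have "\<dots> = (exp (\<i> * of_real (of_int j * s)) + exp (- (\<i> * of_real (of_int j * s)))) / 2"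
    by (rule cos_exp_eq)
  also have "\<i> * of_real (of_int j * s) = \<i> * of_int j * (of_real s :: complex)" by simp
  also have "- (\<i> * of_int j * (of_real s :: complex)) = \<i> * of_int (-j) * of_real s" by simp
  finally show ?thesis .
qed

lemma has_integral_expi_cos:
  "((\<lambda>s. expi p s * (complex_of_real (cos (of_int j * s)) * a - b)) has_integral
    of_real (2*pi) * (a * pm_ind j p / 2 - b * of_bool (p = 0))) {0..2*pi}"
proof -
  have "(\<lambda>s. expi p s * (complex_of_real (cos (of_int j * s)) * a - b))
      = (\<lambda>s. a / 2 * expi (p + j) s + a / 2 * expi (p + - j) s - b * expi p s)"
    unfolding cos_expi expi_mult[symmetric] by (simp add: fun_eq_iff field_simps)
  moreover have "((\<lambda>s. a / 2 * expi (p + j) s + a / 2 * expi (p + - j) s - b * expi p s) has_integral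
      a / 2 * (if p + j = 0 then of_real (2*pi) else 0) + a / 2 * (if p + - j = 0 then of_real (2*pi) else 0)
      - b * (if p = 0 then of_real (2*pi) else 0)) {0..2*pi}"
    by (intro has_integral_add has_integral_diff has_integral_mult_right has_integral_expi)
  ultimately show ?thesis
    by (elim ssubst has_integral_eq_rhs) (auto simp: pm_ind_def field_simps)
qed

lemma fcoeff_cos_mult_minus_1:
  assumes "continuous_on UNIV v"
  shows "fcoeff (\<lambda>x. complex_of_real (cos (of_int j * t) * v x - 1)) n
    = complex_of_real (cos (of_int j * t)) * fcoeff (\<lambda>y. complex_of_real (v y)) n - of_bool (n = 0)"
proof -
  have "continuous_on {0..2*pi} (\<lambda>x. complex_of_real (v x))"
    by (intro continuous_intros continuous_on_subset[OF assms]) auto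
  then have "fcoeff (\<lambda>x. complex_of_real (cos (of_int j * t)) * complex_of_real (v x) - 1) n
      = complex_of_real (cos (of_int j * t)) * fcoeff (\<lambda>y. complex_of_real (v y)) n - fcoeff (\<lambda>x. 1) n"
    by (subst fcoeff_diff) (simp_all add: continuous_on_mult_left fcoeff_cmult)
  then show ?thesis by (simp add: fcoeff_const)
qed

lemma res_avg_cos_mult_op:
  assumes "continuous_on UNIV v" "finsupp c"
  shows "res_avg (\<lambda>t. mult_op (\<lambda>x. complex_of_real (cos (of_int j * t) * v x - 1))) c m
    = matrix_op (avg_coeff (fcoeff (\<lambda>y. complex_of_real (v y))) j) c m"
proof -
  define V where "V = fcoeff (\<lambda>y. complex_of_real (v y))"
  define F where "F = {k. c k \<noteq> 0}"
  have "finite F" using assms(2) by (simp add: F_def finsupp_def)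
  have "((\<lambda>s. expK0 s (mult_op (\<lambda>x. complex_of_real (cos (of_int j * s) * v x - 1)) (expK0 (-s) c)) m)
      has_integral (\<Sum>k\<in>F. of_real (2*pi) * avg_coeff V j m k * c k)) {0..2*pi}"
  proof -
    have "((\<lambda>s. expi (\<bar>m\<bar> - \<bar>k\<bar>) s * (complex_of_real (cos (of_int j * s)) * V (m - k) - of_bool (m - k = 0))
        * c k) has_integral of_real (2*pi) * avg_coeff V j m k * c k) {0..2*pi}" for k
      using has_integral_mult_left[OF has_integral_expi_cos[of "\<bar>m\<bar> - \<bar>k\<bar>" j "V (m - k)"
          "of_bool (m - k = 0)"], of "c k"]
      by (auto simp: avg_coeff_def algebra_simps)
    then show ?thesis
      unfolding expK0_mult_op_expK0[OF assms(2)] fcoeff_cos_mult_minus_1[OF assms(1)] V_def[symmetric]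
        F_def[symmetric]
      by (intro has_integral_sum \<open>finite F\<close>)
  qed
  then show ?thesis
    unfolding res_avg_def
    by (simp add: integral_unique matrix_op_finsupp[OF assms(2)] F_def V_def sum_divide_distrib)
qed

lemma Re_expi_minus_1:
  "complex_of_real (Re (a * expi j x) - 1) = a / 2 * expi j x + cnj a / 2 * expi (-j) x - 1"
proof -
  have cnj: "cnj (a * expi j x) = cnj a * expi (-j) x"
    by (simp add: exp_cnj)
  have "complex_of_real (Re (a * expi j x)) = (a * expi j x + cnj (a * expi j x)) / 2"
    unfolding complex_add_cnj by simp
  then show ?thesis unfolding cnj by (simp add: add_divide_distrib)
qed

lemma mult_op_Re_expi_minus_1:
  "mult_op (\<lambda>x. complex_of_real (Re (V j * expi j x) - 1)) = matrix_op (\<lambda>m k. mult_coeff V j (m - k))"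
proof -
  have "fcoeff (\<lambda>x. complex_of_real (Re (V j * expi j x) - 1)) n = mult_coeff V j n" for n
  proof -
    have "fcoeff (\<lambda>x. V j / 2 * expi j x + cnj (V j) / 2 * expi (-j) x - 1) n
        = fcoeff (\<lambda>x. V j / 2 * expi j x) n + fcoeff (\<lambda>x. cnj (V j) / 2 * expi (-j) x) n - fcoeff (\<lambda>x. 1) n"
      by (subst fcoeff_diff, (intro continuous_intros)+, subst fcoeff_add, (intro continuous_intros)+, rule refl)
    then show ?thesis
      unfolding Re_expi_minus_1 fcoeff_cmult fcoeff_expi fcoeff_const mult_coeff_def by auto
  qed
  then show ?thesis
    unfolding mult_op_eq_matrix_op by simp
qed

subsection \<open>The symbol of the remainder\<close>

definition rem_column :: "(int \<Rightarrow> complex) \<Rightarrow> int \<Rightarrow> nat \<Rightarrow> int \<Rightarrow> real \<Rightarrow> complex" where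
  "rem_column V j \<alpha> k x = (\<Sum>m\<in>rem_support j k. rem_coeff V j m k * (\<i> * of_int (m - k))^\<alpha> * expi (m - k) x)"

text \<open>\<open>Op\<close> only samples a symbol at integer \<open>\<xi>\<close>, where this one reproduces the columns of the matrix
  \<open>rem_coeff\<close>; the bump interpolates smoothly in between.\<close>

definition rem_symbol :: "(int \<Rightarrow> complex) \<Rightarrow> int \<Rightarrow> real \<Rightarrow> real \<Rightarrow> complex" where
  "rem_symbol V j x \<xi> = complex_of_real (bump (\<xi> - of_int (round \<xi>))) * rem_column V j 0 (round \<xi>) x"

lemma fcoeff_rem_column: "fcoeff (rem_column V j 0 k) (m - k) = rem_coeff V j m k"
proof -
  have "fcoeff (rem_column V j 0 k) (m - k) = (\<Sum>n\<in>rem_support j k. fcoeff (\<lambda>x. rem_coeff V j n k * expi (n - k) x) (m - k))"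
    unfolding rem_column_def power_0 mult_1_right
    by (rule fcoeff_sum[OF finite_rem_support]) (intro continuous_intros)
  also have "\<dots> = (\<Sum>n\<in>rem_support j k. if n = m then rem_coeff V j n k else 0)"
    by (intro sum.cong refl) (simp only: fcoeff_cmult fcoeff_expi, auto)
  also have "\<dots> = rem_coeff V j m k"
    using rem_coeff_eq_0[of m j k V] by (auto simp: sum.delta[OF finite_rem_support])
  finally show ?thesis .
qed

lemma Op_rem_symbol: "Op (rem_symbol V j) = matrix_op (rem_coeff V j)"
  unfolding Op_eq_matrix_op by (simp add: rem_symbol_def bump_0 fcoeff_rem_column)

lemma selfadjoint_Op_rem_symbol: "conj_symmetric V \<Longrightarrow> selfadjoint_op (Op (rem_symbol V j))"
  unfolding Op_rem_symbol by (intro selfadjoint_matrix_op rem_coeff_swap)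

lemma has_vector_derivative_rem_column:
  "(rem_column V j \<alpha> k has_vector_derivative rem_column V j (Suc \<alpha>) k x) (at x)"
proof -
  have "((\<lambda>y. \<Sum>m\<in>rem_support j k. rem_coeff V j m k * (\<i> * of_int (m - k))^\<alpha> * expi (m - k) y)
      has_vector_derivative
      (\<Sum>m\<in>rem_support j k. rem_coeff V j m k * (\<i> * of_int (m - k))^\<alpha> * (\<i> * of_int (m - k) * expi (m - k) x)))
      (at x)"
    by (intro has_vector_derivative_sum has_vector_derivative_mult_right has_vector_derivative_expi)
  then show ?thesis unfolding rem_column_def by (simp add: mult_ac)
qed

lemma continuous_on_rem_column: "continuous_on S (rem_column V j \<alpha> k)"
  unfolding rem_column_def by (intro continuous_intros)

lemma rem_symbol_periodic: "rem_symbol V j (x + 2*pi) \<xi> = rem_symbol V j x \<xi>"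
  unfolding rem_symbol_def rem_column_def expi_periodic ..

lemma norm_rem_column_le:
  assumes C: "\<And>m. (2 + real_of_int \<bar>k\<bar>)^N * real_of_int \<bar>m - k\<bar>^\<alpha> * norm (rem_coeff V j m k) \<le> C"
  shows "norm (rem_column V j \<alpha> k x) \<le> 4 * C / (2 + real_of_int \<bar>k\<bar>)^N"
proof -
  have pos: "0 < (2 + real_of_int \<bar>k\<bar>)^N" by simp
  have "0 \<le> C" by (rule order_trans[OF _ C[of k]]) simp
  have summand: "norm (rem_coeff V j m k * (\<i> * of_int (m - k))^\<alpha> * expi (m - k) x) \<le> C / (2 + real_of_int \<bar>k\<bar>)^N"
    for m
    using C[of m] pos by (simp add: norm_mult norm_power norm_expi field_simps flip: of_int_diff)
  have "norm (rem_column V j \<alpha> k x)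
      \<le> (\<Sum>m\<in>rem_support j k. norm (rem_coeff V j m k * (\<i> * of_int (m - k))^\<alpha> * expi (m - k) x))"
    unfolding rem_column_def by (rule norm_sum)
  also have "\<dots> \<le> of_nat (card (rem_support j k)) * (C / (2 + real_of_int \<bar>k\<bar>)^N)"
    by (rule sum_bounded_above) (rule summand)
  also have "\<dots> \<le> 4 * (C / (2 + real_of_int \<bar>k\<bar>)^N)"
    using card_rem_support_le[of j k] \<open>0 \<le> C\<close> pos by (intro mult_right_mono) auto
  finally show ?thesis by simp
qed

definition count_dx :: "bool list \<Rightarrow> nat" where
  "count_dx ws = length (filter id ws)"

definition count_dxi :: "bool list \<Rightarrow> nat" where
  "count_dxi ws = length (filter Not ws)"

lemma pdword_append: "pdword (ws1 @ ws2) a = pdword ws1 (pdword ws2 a)"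
  by (induction ws1) auto

lemma pdword_replicate_True: "pdword (replicate n True) a = (pdx^^n) a"
  by (induction n) auto

lemma pdword_replicate_False: "pdword (replicate n False) a = (pdxi^^n) a"
  by (induction n) auto

lemma pdword_eq_on_open:
  assumes "open B" "\<And>x \<xi>. \<xi> \<in> B \<Longrightarrow> a x \<xi> = b x \<xi>" "\<xi> \<in> B"
  shows "pdword ws a x \<xi> = pdword ws b x \<xi>"
  using assms(3)
proof (induction ws arbitrary: x \<xi>)
  case Nil
  then show ?case using assms(2) by simp
next
  case (Cons c ws)
  show ?case
  proof (cases c)
    case True
    have "(\<lambda>y. pdword ws a y \<xi>) = (\<lambda>y. pdword ws b y \<xi>)" using Cons by auto
    then show ?thesis using True by (simp add: pdx_def)
  next
    case False
    have "eventually (\<lambda>\<eta>. \<eta> \<in> UNIV \<longrightarrow> pdword ws a x \<eta> = pdword ws b x \<eta>) (nhds \<xi>)"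
      using eventually_nhds_in_open[OF assms(1) Cons.prems] by (rule eventually_mono) (use Cons.IH in auto)
    then have "vector_derivative (\<lambda>\<eta>. pdword ws a x \<eta>) (at \<xi>) = vector_derivative (\<lambda>\<eta>. pdword ws b x \<eta>) (at \<xi>)"
      by (rule vector_derivative_cong_eq) auto
    then show ?thesis using False by (simp add: pdxi_def)
  qed
qed

lemma has_vector_derivative_bump_shift:
  "((\<lambda>\<eta>. complex_of_real ((deriv^^\<beta>) bump (\<eta> - of_int k))) has_vector_derivative
    complex_of_real ((deriv^^Suc \<beta>) bump (\<xi> - of_int k))) (at \<xi>)"
proof -
  have "((\<lambda>\<eta>. (deriv^^\<beta>) bump (\<eta> - of_int k)) has_real_derivative (deriv^^Suc \<beta>) bump (\<xi> - of_int k) * 1)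
      (at \<xi>)"
    by (intro DERIV_chain2[OF smooth_real_DERIV[OF smooth_real_bump]]) (auto intro!: derivative_eq_intros)
  then show ?thesis by (intro has_vector_derivative_of_real) simp
qed

text \<open>Near \<open>\<xi>\<^sub>0\<close> the rounding in \<open>rem_symbol\<close> can be frozen to \<open>k = round \<xi>\<^sub>0\<close>, because the bump vanishes
  wherever the rounding jumps.\<close>

lemma rem_symbol_eq_near:
  assumes "\<bar>\<xi> - \<xi>0\<bar> < 1/8"
  shows "rem_symbol V j x \<xi>
    = complex_of_real (bump (\<xi> - of_int (round \<xi>0))) * rem_column V j 0 (round \<xi>0) x"
proof (cases "round \<xi> = round \<xi>0")
  case True
  then show ?thesis by (simp add: rem_symbol_def)
next
  case False
  let ?k = "round \<xi>" and ?l = "round \<xi>0"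
  have "\<bar>\<xi> - of_int ?k\<bar> \<le> \<bar>\<xi> - of_int ?l\<bar>"
    using round_diff_minimal[of \<xi> ?l] by simp
  moreover have "\<bar>of_int ?l - \<xi>0\<bar> \<le> 1/2"
    by (rule of_int_round_abs_le)
  moreover have "\<bar>?k - ?l\<bar> \<ge> 1"
    using False by linarith
  then have "\<bar>real_of_int ?k - of_int ?l\<bar> \<ge> 1"
    by (metis of_int_abs of_int_diff of_int_le_iff of_int_1)
  ultimately have "\<bar>\<xi> - of_int ?l\<bar> \<ge> 1/2" "\<bar>\<xi> - of_int ?k\<bar> \<ge> 1/4"
    using assms by linarith+
  then show ?thesis by (simp add: rem_symbol_def bump_eq_0)
qed

lemma pdword_bump_column:
  "pdword ws (\<lambda>x \<eta>. complex_of_real (bump (\<eta> - of_int k)) * rem_column V j 0 k x)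
    = (\<lambda>x \<eta>. complex_of_real ((deriv^^count_dxi ws) bump (\<eta> - of_int k)) * rem_column V j (count_dx ws) k x)"
proof (induction ws)
  case Nil
  then show ?case by (simp add: count_dx_def count_dxi_def)
next
  case (Cons b ws)
  show ?case
  proof (cases b)
    case True
    have "pdx (\<lambda>x \<eta>. complex_of_real ((deriv^^count_dxi ws) bump (\<eta> - of_int k)) * rem_column V j (count_dx ws) k x)
      = (\<lambda>x \<eta>. complex_of_real ((deriv^^count_dxi ws) bump (\<eta> - of_int k)) * rem_column V j (Suc (count_dx ws)) k x)"
      unfolding pdx_def
      by (intro ext vector_derivative_at has_vector_derivative_mult_right has_vector_derivative_rem_column)
    then show ?thesis using Cons True by (simp add: count_dx_def count_dxi_def)
  next
    case False
    have "pdxi (\<lambda>x \<eta>. complex_of_real ((deriv^^count_dxi ws) bump (\<eta> - of_int k)) * rem_column V j (count_dx ws) k x)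
      = (\<lambda>x \<eta>. complex_of_real ((deriv^^Suc (count_dxi ws)) bump (\<eta> - of_int k)) * rem_column V j (count_dx ws) k x)"
      unfolding pdxi_def
      by (intro ext vector_derivative_at has_vector_derivative_mult_left has_vector_derivative_bump_shift)
    then show ?thesis using Cons False by (simp add: count_dx_def count_dxi_def)
  qed
qed

lemma pdword_rem_symbol_near:
  assumes "\<bar>\<eta> - \<xi>\<bar> < 1/8"
  shows "pdword ws (rem_symbol V j) x \<eta>
    = complex_of_real ((deriv^^count_dxi ws) bump (\<eta> - of_int (round \<xi>)))
      * rem_column V j (count_dx ws) (round \<xi>) x"
proof -
  have "pdword ws (rem_symbol V j) x \<eta>
      = pdword ws (\<lambda>x \<eta>. complex_of_real (bump (\<eta> - of_int (round \<xi>))) * rem_column V j 0 (round \<xi>) x) x \<eta>"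
    using assms
    by (intro pdword_eq_on_open[of "ball \<xi> (1/8)"] rem_symbol_eq_near)
      (auto simp: dist_real_def abs_minus_commute)
  then show ?thesis by (simp add: pdword_bump_column)
qed

lemma pdword_rem_symbol:
  "pdword ws (rem_symbol V j) x \<xi>
    = complex_of_real ((deriv^^count_dxi ws) bump (\<xi> - of_int (round \<xi>)))
      * rem_column V j (count_dx ws) (round \<xi>) x"
  by (rule pdword_rem_symbol_near) simp

lemma continuous_on_pdword_rem_symbol:
  "continuous_on UNIV (\<lambda>(x, \<xi>). pdword ws (rem_symbol V j) x \<xi>)"
proof -
  let ?Q = "\<lambda>k (p::real \<times> real).
    complex_of_real ((deriv^^count_dxi ws) bump (snd p - of_int k)) * rem_column V j (count_dx ws) k (fst p)"
  have "isCont (\<lambda>p. pdword ws (rem_symbol V j) (fst p) (snd p)) p" for p :: "real \<times> real"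
  proof -
    have "continuous_on UNIV (?Q (round (snd p)))"
      by (intro continuous_intros continuous_on_compose2[OF smooth_real_continuous_on[OF smooth_real_bump]]
          continuous_on_compose2[OF continuous_on_rem_column]) auto
    then have "isCont (?Q (round (snd p))) p"
      by (rule continuous_on_interior) simp
    moreover have ev: "eventually (\<lambda>q. ?Q (round (snd p)) q = pdword ws (rem_symbol V j) (fst q) (snd q)) (nhds p)"
      using eventually_nhds_in_open[OF open_Times[OF open_UNIV open_ball], of p "snd p" "1/8"]
      by (auto elim!: eventually_mono intro!: pdword_rem_symbol_near[symmetric]
          simp: dist_real_def abs_minus_commute mem_Times_iff)
    ultimately show ?thesis
      using isCont_cong[OF ev] by simp
  qed
  then show ?thesis
    by (simp add: case_prod_beta' continuous_at_imp_continuous_on)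
qed

lemma smooth2_rem_symbol: "smooth2 (rem_symbol V j)"
  unfolding smooth2_def
proof (intro allI conjI)
  fix ws :: "bool list" and x \<xi> :: real
  show "continuous_on UNIV (\<lambda>(x, \<xi>). pdword ws (rem_symbol V j) x \<xi>)"
    by (rule continuous_on_pdword_rem_symbol)
  have "((\<lambda>y. pdword ws (rem_symbol V j) y \<xi>) has_vector_derivative
      complex_of_real ((deriv^^count_dxi ws) bump (\<xi> - of_int (round \<xi>)))
      * rem_column V j (Suc (count_dx ws)) (round \<xi>) x) (at x)"
    unfolding pdword_rem_symbol by (intro has_vector_derivative_mult_right has_vector_derivative_rem_column)
  then show "(\<lambda>y. pdword ws (rem_symbol V j) y \<xi>) differentiable at x"
    by (rule differentiableI_vector)
  have "((\<lambda>\<eta>. complex_of_real ((deriv^^count_dxi ws) bump (\<eta> - of_int (round \<xi>)))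
      * rem_column V j (count_dx ws) (round \<xi>) x) has_vector_derivative
      complex_of_real ((deriv^^Suc (count_dxi ws)) bump (\<xi> - of_int (round \<xi>)))
      * rem_column V j (count_dx ws) (round \<xi>) x) (at \<xi>)"
    by (intro has_vector_derivative_mult_left has_vector_derivative_bump_shift)
  then have "((\<lambda>\<eta>. pdword ws (rem_symbol V j) x \<eta>) has_vector_derivative
      complex_of_real ((deriv^^Suc (count_dxi ws)) bump (\<xi> - of_int (round \<xi>)))
      * rem_column V j (count_dx ws) (round \<xi>) x) (at \<xi>)"
    by (rule has_vector_derivative_transform_within_open[of _ _ _ "ball \<xi> (1/8)"])
      (auto simp: dist_real_def abs_minus_commute intro!: pdword_rem_symbol_near[symmetric])
  then show "(\<lambda>\<eta>. pdword ws (rem_symbol V j) x \<eta>) differentiable at \<xi>"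
    by (rule differentiableI_vector)
qed

lemma japanese_bracket_powr_le:
  assumes "\<bar>\<xi> - of_int k\<bar> \<le> 1/2"
  shows "1 / (2 + real_of_int \<bar>k\<bar>)^Suc \<beta> \<le> (sqrt (1 + \<xi>\<^sup>2)) powr (- 1 - real \<beta>)"
proof -
  define s where "s = sqrt (1 + \<xi>\<^sup>2)"
  have "1 \<le> s" unfolding s_def by simp
  have "\<bar>\<xi>\<bar> \<le> real_of_int \<bar>k\<bar> + 1/2" using assms by linarith
  then have "\<xi>\<^sup>2 \<le> (real_of_int \<bar>k\<bar> + 1/2)\<^sup>2"
    by (metis abs_ge_zero power2_abs power_mono)
  then have "1 + \<xi>\<^sup>2 \<le> (2 + real_of_int \<bar>k\<bar>)\<^sup>2"
    by (simp add: power2_eq_square algebra_simps)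
  then have "s \<le> sqrt ((2 + real_of_int \<bar>k\<bar>)\<^sup>2)"
    unfolding s_def by (rule real_sqrt_le_mono)
  then have "s \<le> 2 + real_of_int \<bar>k\<bar>"
    by simp
  then have "1 / (2 + real_of_int \<bar>k\<bar>)^Suc \<beta> \<le> 1 / s ^ Suc \<beta>"
    using \<open>1 \<le> s\<close> by (intro divide_left_mono power_mono mult_pos_pos) auto
  also have "1 / s ^ Suc \<beta> = s powr (- 1 - real \<beta>)"
  proof -
    have "s powr (- 1 - real \<beta>) = inverse (s powr (real (Suc \<beta>)))"
      using \<open>1 \<le> s\<close> by (simp add: powr_minus[symmetric])
    also have "s powr (real (Suc \<beta>)) = s ^ Suc \<beta>"
      by (rule powr_realpow) (use \<open>1 \<le> s\<close> in simp)
    finally show ?thesis by (simp add: inverse_eq_divide)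
  qed
  finally show ?thesis unfolding s_def .
qed

lemma rem_symbol_bound:
  assumes "rapid_decay V" "conj_symmetric V"
  shows "\<exists>C. \<forall>x \<xi>. norm ((pdx^^\<alpha>) ((pdxi^^\<beta>) (rem_symbol V j)) x \<xi>)
    \<le> C * (sqrt (1 + \<xi>\<^sup>2)) powr (- 1 - real \<beta>)"
proof -
  obtain C where C: "\<And>m k. (2 + real_of_int \<bar>k\<bar>)^Suc \<beta> * real_of_int \<bar>m - k\<bar>^\<alpha> * norm (rem_coeff V j m k) \<le> C"
    using rem_coeff_decay[OF assms, of "Suc \<beta>" \<alpha> j] by blast
  have "0 \<le> C" by (rule order_trans[OF _ C[of 0 0]]) simp
  obtain M where "0 \<le> M" and M: "\<And>t. t \<in> {-1/2..1/2} \<Longrightarrow> norm ((deriv^^\<beta>) bump t) \<le> M"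
    using continuous_on_compact_bound[OF compact_Icc smooth_real_continuous_on[OF smooth_real_bump]] by blast
  have "norm ((pdx^^\<alpha>) ((pdxi^^\<beta>) (rem_symbol V j)) x \<xi>) \<le> (4 * M * C) * (sqrt (1 + \<xi>\<^sup>2)) powr (- 1 - real \<beta>)"
    for x \<xi>
  proof -
    let ?k = "round \<xi>"
    have "(pdx^^\<alpha>) ((pdxi^^\<beta>) (rem_symbol V j)) = pdword (replicate \<alpha> True @ replicate \<beta> False) (rem_symbol V j)"
      by (simp add: pdword_append pdword_replicate_True pdword_replicate_False)
    then have eq: "(pdx^^\<alpha>) ((pdxi^^\<beta>) (rem_symbol V j)) x \<xi>
        = complex_of_real ((deriv^^\<beta>) bump (\<xi> - of_int ?k)) * rem_column V j \<alpha> ?k x"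
      by (simp add: pdword_rem_symbol count_dx_def count_dxi_def)
    have round: "\<bar>\<xi> - of_int ?k\<bar> \<le> 1/2"
      using of_int_round_abs_le[of \<xi>] by (simp add: abs_minus_commute)
    then have "norm ((deriv^^\<beta>) bump (\<xi> - of_int ?k)) \<le> M"
      by (intro M) (use abs_le_D1 abs_le_D2 in fastforce)
    then have "norm ((pdx^^\<alpha>) ((pdxi^^\<beta>) (rem_symbol V j)) x \<xi>)
        \<le> M * (4 * C / (2 + real_of_int \<bar>?k\<bar>)^Suc \<beta>)"
      unfolding eq norm_mult norm_of_real using norm_rem_column_le[OF C, of ?k x] \<open>0 \<le> M\<close>
      by (intro mult_mono) auto
    also have "\<dots> = (4 * M * C) * (1 / (2 + real_of_int \<bar>?k\<bar>)^Suc \<beta>)"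
      by simp
    also have "\<dots> \<le> (4 * M * C) * (sqrt (1 + \<xi>\<^sup>2)) powr (- 1 - real \<beta>)"
      using round \<open>0 \<le> M\<close> \<open>0 \<le> C\<close>
      by (intro mult_left_mono japanese_bracket_powr_le) auto
    finally show ?thesis .
  qed
  then show ?thesis by blast
qed

lemma Sper_rem_symbol: "rapid_decay V \<Longrightarrow> conj_symmetric V \<Longrightarrow> Sper (-1) (rem_symbol V j)"
  unfolding Sper_def using smooth2_rem_symbol rem_symbol_periodic rem_symbol_bound by blast

theorem mainTheorem18:
  fixes v :: "real \<Rightarrow> real" and j :: int
  assumes "smooth_real v" and "periodic2pi v" and "j \<noteq> 0"
  shows "\<exists>a. Sper (-1) a \<and> selfadjoint_op (Op a) \<and>
    (\<forall>c. finsupp c \<longrightarrow>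
       res_avg (\<lambda>t. mult_op (\<lambda>x. complex_of_real (cos (of_int j * t) * v x - 1))) c
       = (\<lambda>m. mult_op (\<lambda>x. complex_of_real
                 (Re (fcoeff (\<lambda>y. complex_of_real (v y)) j * exp (\<i> * of_int j * of_real x)) - 1)) c m
             + Op a c m))"
proof -
  define V where "V = fcoeff (\<lambda>y. complex_of_real (v y))"
  have periodic: "\<And>x. v (x + 2*pi) = v x"
    using assms(2) by (simp add: periodic2pi_def)
  have "rapid_decay V" "conj_symmetric V"
    unfolding V_def by (rule rapid_decay_fcoeff[of v, OF assms(1) periodic] conj_symmetric_fcoeff_of_real)+
  moreover have "res_avg (\<lambda>t. mult_op (\<lambda>x. complex_of_real (cos (of_int j * t) * v x - 1))) c m
      = mult_op (\<lambda>x. complex_of_real (Re (V j * expi j x) - 1)) c m + Op (rem_symbol V j) c m"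
    if "finsupp c" for c m
  proof -
    have "continuous_on UNIV v"
      using smooth_real_continuous_on[OF assms(1), of UNIV 0] by simp
    then have "res_avg (\<lambda>t. mult_op (\<lambda>x. complex_of_real (cos (of_int j * t) * v x - 1))) c m
        = matrix_op (avg_coeff V j) c m"
      unfolding V_def by (rule res_avg_cos_mult_op[OF _ that])
    also have "\<dots> = matrix_op (\<lambda>m k. mult_coeff V j (m - k)) c m + matrix_op (rem_coeff V j) c m"
      by (simp add: matrix_op_add[OF that, symmetric] rem_coeff_def)
    finally show ?thesis
      unfolding mult_op_Re_expi_minus_1 Op_rem_symbol .
  qed
  ultimately show ?thesis
    unfolding V_def[symmetric]
    by (intro exI[of _ "rem_symbol V j"] conjI allI impI ext Sper_rem_symbol selfadjoint_Op_rem_symbol)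
qed

end
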